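(* Let $D\geq 2$ be a square-free integer, $K=\mathbb{Q}(\sqrt{D})$ with ring of integers $\mathbb{Z}_K$, and let $p\geq 5$ be a prime not dividing $D$. Let $u_K>1$ be the fundamental unit of $K$ (with respect to the real embedding sending $\sqrt{D}$ to a positive number), and let $u_D$ be the first totally positive power of $u_K$ (so $u_D=u_K^2$ if $u_K$ has norm $-1$, and $u_D=u_K$ otherwise). For $\ell\geq 1$ put $d_\ell(D)=u_D^\ell+u_D^{-\ell}+1$ (a positive integer). Suppose there exists $\ell\geq 1$ with $p\mid d_\ell(D)$, and let $\ell$ be the least such index. If $p^2\mid d_\ell(D)$, then the order of $u_K$ in $(\mathbb{Z}_K/p\mathbb{Z}_K)^\times$ equals the order of $u_K$ in $(\mathbb{Z}_K/p^2\mathbb{Z}_K)^\times$. *)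

theory Defs
  imports "HOL-Computational_Algebra.Computational_Algebra"
begin

text \<open>K = Q(sqrt D), viewed inside the reals via the embedding sending sqrt D to the
  positive square root.\<close>
definition QK :: "int \<Rightarrow> real set" where
  "QK D = {x. \<exists>a b :: rat. x = of_rat a + of_rat b * sqrt (real_of_int D)}"

definition OK :: "int \<Rightarrow> real set" where
  "OK D = {x \<in> QK D. algebraic_int x}"

definition conjK :: "int \<Rightarrow> real \<Rightarrow> real" where
  "conjK D x = (THE y. \<exists>a b :: rat. x = of_rat a + of_rat b * sqrt (real_of_int D)
                         \<and> y = of_rat a - of_rat b * sqrt (real_of_int D))"

definition normK :: "int \<Rightarrow> real \<Rightarrow> real" where
  "normK D x = x * conjK D x"

definition unitsOK :: "int \<Rightarrow> real set" where
  "unitsOK D = {x \<in> OK D. x \<noteq> 0 \<and> inverse x \<in> OK D}"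

definition fund_unit :: "int \<Rightarrow> real" where
  "fund_unit D = (THE u. u \<in> unitsOK D \<and> u > 1 \<and> (\<forall>v \<in> unitsOK D. v > 1 \<longrightarrow> u \<le> v))"

definition uD :: "int \<Rightarrow> real" where
  "uD D = (if normK D (fund_unit D) = -1 then fund_unit D ^ 2 else fund_unit D)"

definition dl :: "int \<Rightarrow> nat \<Rightarrow> real" where
  "dl D l = uD D ^ l + inverse (uD D) ^ l + 1"

definition congOK :: "int \<Rightarrow> int \<Rightarrow> real \<Rightarrow> real \<Rightarrow> bool" where
  "congOK D m x y \<longleftrightarrow> (x - y) / real_of_int m \<in> OK D"

definition ord_mod :: "int \<Rightarrow> int \<Rightarrow> real \<Rightarrow> nat" where
  "ord_mod D m u = (LEAST n::nat. n > 0 \<and> congOK D m (u ^ n) 1)"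

end

theory Submission
  imports Defs "HOL-Analysis.Kronecker_Approximation_Theorem"
begin

(*
  The ring of integers is {(A + B sqrt D)/2 | 4 dvd A^2 - D B^2}: an algebraic integer of K
  has integral norm (its powers have bounded denominators) and integral trace. This makes
  congruences modulo m Z_K concrete, and together with Pell's equation (via Dirichlet's
  approximation theorem) it shows that the fundamental unit u_K exists.

  Put u = u_D and x = u^l. Since x^3 - 1 = (x - 1) x d_l(D), the hypothesis p^2 | d_l(D) gives
  u_K^(6l) = 1 mod p^2. Minimality of l forces p not to divide l: the integers t_j = u^j + u^-j
  satisfy t_(pj) = t_j^p = t_j mod p (freshman's dream in Z_K and Fermat). Hence the order M of
  u_K modulo p^2 divides 6l and, as p >= 5, is prime to p. If m is the order modulo p, then
  u_K^(mp) = 1 mod p^2, so M divides mp and thus m; and m divides M trivially.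
*)

lemma Ints_if_bounded_power_denominators:
  fixes q :: "'a :: field_char_0"
  assumes "q \<in> \<rat>" and "c > 0" and "\<And>k. of_int c * q ^ k \<in> \<int>"
  shows "q \<in> \<int>"
proof -
  obtain a b where ab: "b > 0" "coprime a b" and q: "q = of_int a / of_int b"
    using assms(1) by (auto elim: Rats_cases')
  have "b ^ k dvd c" for k
  proof -
    obtain z where "of_int c * q ^ k = of_int z"
      using assms(3)[of k] by (auto elim: Ints_cases)
    then have "of_int c * of_int a ^ k = (of_int z * of_int b ^ k :: 'a)"
      using ab(1) by (simp add: q power_divide field_simps)
    then have "c * a ^ k = z * b ^ k"
      by (metis of_int_eq_iff of_int_mult of_int_power)
    then have "b ^ k dvd c * a ^ k"
      by simp
    with ab(2) show ?thesis
      by (simp add: coprime_dvd_mult_left_iff coprime_commute)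
  qed
  have "b = 1"
  proof (rule ccontr)
    assume "b \<noteq> 1"
    with ab(1) have "2 ^ nat c \<le> b ^ nat c"
      by (intro power_mono) auto
    also have "\<dots> \<le> c"
      using \<open>b ^ nat c dvd c\<close> assms(2) by (simp add: zdvd_imp_le)
    finally have "2 ^ nat c \<le> c" .
    moreover have "int (nat c) < 2 ^ nat c"
      by (metis less_exp of_nat_less_iff of_nat_numeral of_nat_power)
    ultimately show False
      using assms(2) by linarith
  qed
  then show ?thesis
    by (simp add: q)
qed

lemma Rats_common_denominator:
  fixes A :: "'a :: field_char_0 set"
  assumes "finite A" and "A \<subseteq> \<rat>"
  shows "\<exists>c::int. c > 0 \<and> (\<forall>q\<in>A. of_int c * q \<in> \<int>)"
  using assms
proof (induction A rule: finite_induct)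
  case empty
  show ?case
    by (intro exI[of _ 1]) simp
next
  case (insert q A)
  then obtain c where c: "c > 0" "\<forall>r\<in>A. of_int c * r \<in> \<int>"
    by auto
  obtain a b where ab: "b > 0" and q: "q = of_int a / of_int b"
    using insert.prems by (auto elim: Rats_cases')
  have "of_int (c * b) * r \<in> \<int>" if "r \<in> A" for r
    using c(2) that by (metis Ints_mult Ints_of_int mult.commute mult.left_commute of_int_mult)
  moreover have "of_int (c * b) * q = (of_int (c * a) :: 'a)"
    using ab by (simp add: q)
  then have "of_int (c * b) * q \<in> \<int>"
    by (metis Ints_of_int)
  ultimately show ?case
    using c(1) ab by (intro exI[of _ "c * b"]) (auto simp: zero_less_mult_iff)
qed

lemma monic_root_power_as_low_degree_poly:
  fixes P :: "'a :: comm_ring_1 poly"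
  assumes P: "lead_coeff P = 1" "\<forall>i. coeff P i \<in> \<int>" "poly P x = 0"
  shows "\<exists>r. degree r < degree P \<and> (\<forall>i. coeff r i \<in> \<int>) \<and> poly r x = x ^ k"
proof -
  define n where "n = degree P"
  have "n > 0"
    using P by (intro Nat.gr0I) (auto simp: n_def elim!: degree_eq_zeroE)
  then obtain m where m: "n = Suc m"
    using not0_implies_Suc by blast
  have "\<exists>r. degree r < n \<and> (\<forall>i. coeff r i \<in> \<int>) \<and> poly r x = x ^ k"
  proof (induction k)
    case 0
    show ?case
      using \<open>n > 0\<close> by (intro exI[of _ 1]) auto
  next
    case (Suc k)
    then obtain r where r: "degree r < n" "\<forall>i. coeff r i \<in> \<int>" "poly r x = x ^ k"
      by blast
    \<comment> \<open>multiply by \<open>x\<close> and cancel the leading term with \<open>P\<close>\<close>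
    define r' where "r' = pCons 0 r - smult (coeff r m) P"
    have "degree r' \<le> n"
      unfolding r'_def using r(1) degree_pCons_le[of 0 r]
      by (intro degree_diff_le) (auto simp: n_def degree_smult_le)
    moreover have "coeff r' n = 0"
      using P(1) by (simp add: r'_def m n_def[symmetric])
    ultimately have "degree r' < n"
      using \<open>n > 0\<close> by (metis le_neq_implies_less leading_coeff_0_iff degree_0 less_not_refl)
    moreover have "\<forall>i. coeff r' i \<in> \<int>"
      using r(2) P(2) by (auto simp: r'_def coeff_pCons split: nat.split)
    moreover have "poly r' x = x ^ Suc k"
      using r(3) P(3) by (simp add: r'_def)
    ultimately show ?case
      by blast
  qed
  then show ?thesis
    by (simp add: n_def)
qed

lemma algebraic_int_powers_in_finite_span:
  assumes "algebraic_int x"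
  obtains n where "\<And>k. \<exists>z::nat \<Rightarrow> int. x ^ k = (\<Sum>i<n. of_int (z i) * x ^ i)"
proof -
  obtain P where P: "lead_coeff P = 1" "\<forall>i. coeff P i \<in> \<int>" "poly P x = 0"
    using assms by (auto simp: algebraic_int.simps)
  show ?thesis
  proof (rule that)
    fix k
    obtain r where r: "degree r < degree P" "\<forall>i. coeff r i \<in> \<int>" "poly r x = x ^ k"
      using monic_root_power_as_low_degree_poly[OF P] by blast
    have "\<forall>i. \<exists>z. coeff r i = of_int z"
      using r(2) by (meson Ints_cases)
    then obtain z where z: "\<And>i. coeff r i = of_int (z i)"
      by metis
    have "poly r x = (\<Sum>i<degree P. coeff r i * x ^ i)"
      using r(1) by (simp add: poly_altdef) (intro sum.mono_neutral_left, auto simp: coeff_eq_0)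
    then show "\<exists>z::nat \<Rightarrow> int. x ^ k = (\<Sum>i<degree P. of_int (z i) * x ^ i)"
      using r(3) by (auto simp: z)
  qed
qed

lemma algebraic_int_add_of_int:
  assumes "algebraic_int x"
  shows "algebraic_int (x + of_int m)"
proof -
  obtain P where P: "lead_coeff P = 1" "\<forall>i. coeff P i \<in> \<int>" "poly P x = 0"
    using assms by (auto simp: algebraic_int.simps)
  define Q where "Q = pcompose P [:- of_int m, 1:]"
  have "poly Q (x + of_int m) = 0"
    by (simp add: Q_def poly_pcompose P)
  moreover have "lead_coeff Q = 1"
    using P(1) by (simp add: Q_def lead_coeff_comp)
  moreover have "\<forall>i. coeff Q i \<in> \<int>"
    unfolding Q_def using P(2)
    by (intro allI coeff_pcompose_semiring_closed) (auto simp: coeff_pCons split: nat.split)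
  ultimately show ?thesis
    by (intro algebraic_int.intros)
qed

lemma squarefree_mult_square_in_Ints:
  fixes D :: int and q :: "'a :: field_char_0"
  assumes "squarefree D" and "q \<in> \<rat>" and "of_int D * q ^ 2 \<in> \<int>"
  shows "q \<in> \<int>"
proof -
  obtain a b where ab: "b > 0" "coprime a b" and q: "q = of_int a / of_int b"
    using assms(2) by (auto elim: Rats_cases')
  obtain z where "of_int D * q ^ 2 = of_int z"
    using assms(3) by (auto elim: Ints_cases)
  then have "of_int D * of_int a ^ 2 = (of_int z * of_int b ^ 2 :: 'a)"
    using ab(1) by (simp add: q power_divide field_simps)
  then have "D * a ^ 2 = z * b ^ 2"
    by (metis of_int_eq_iff of_int_mult of_int_power)
  then have "b ^ 2 dvd D * a ^ 2"
    by simp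
  with ab(2) have "b ^ 2 dvd D"
    by (simp add: coprime_dvd_mult_left_iff coprime_commute)
  with assms(1) ab(1) have "b = 1"
    by (auto simp: squarefree_def)
  then show ?thesis
    by (simp add: q)
qed

lemma power_add_prime:
  fixes a b :: "'a :: comm_ring_1"
  assumes "prime p"
  shows "(a + b) ^ p = a ^ p + b ^ p
           + of_nat p * (\<Sum>k\<in>{1..<p}. of_nat ((p choose k) div p) * a ^ k * b ^ (p - k))"
proof -
  have p2: "p \<ge> 2"
    using assms prime_ge_2_nat by blast
  have "(a + b) ^ p = (\<Sum>k\<le>p. of_nat (p choose k) * a ^ k * b ^ (p - k))"
    by (rule binomial_ring)
  also have "{..p} = insert 0 (insert p {1..<p})"
    using p2 by auto
  also have "(\<Sum>k\<in>\<dots>. of_nat (p choose k) * a ^ k * b ^ (p - k))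
      = b ^ p + a ^ p + (\<Sum>k\<in>{1..<p}. of_nat (p choose k) * a ^ k * b ^ (p - k))"
    using p2 by (simp add: sum.insert)
  also have "(\<Sum>k\<in>{1..<p}. of_nat (p choose k) * a ^ k * b ^ (p - k))
      = of_nat p * (\<Sum>k\<in>{1..<p}. of_nat ((p choose k) div p) * a ^ k * b ^ (p - k))"
    unfolding sum_distrib_left
  proof (intro sum.cong refl)
    fix k assume "k \<in> {1..<p}"
    then have "p dvd (p choose k)"
      using assms by (intro dvd_choose_prime) auto
    then show "of_nat (p choose k) * a ^ k * b ^ (p - k)
        = of_nat p * (of_nat ((p choose k) div p) * a ^ k * b ^ (p - k))"
      by (metis (no_types, lifting) dvd_mult_div_cancel mult.assoc of_nat_mult)
  qed
  finally show ?thesis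
    by (simp add: add_ac)
qed

lemma prime_dvd_power_self:
  fixes t :: int
  assumes "prime p"
  shows "int p dvd t ^ p - t"
proof -
  have nonneg: "int p dvd int n ^ p - int n" for n
  proof (induction n)
    case 0
    then show ?case
      using assms by (simp add: prime_gt_0_nat power_0_left)
  next
    case (Suc n)
    let ?S = "\<Sum>k\<in>{1..<p}. int ((p choose k) div p) * int n ^ k"
    have "(int n + 1) ^ p = int n ^ p + 1 + int p * ?S"
      using power_add_prime[OF assms, of "int n" 1] by simp
    then have "int (Suc n) ^ p - int (Suc n) = (int n ^ p - int n) + int p * ?S"
      by (simp add: add.commute)
    then show ?case
      using Suc.IH by (metis dvd_add dvd_triv_left)
  qed
  have "int p dvd (t mod int p) ^ p - t mod int p"
    using nonneg[of "nat (t mod int p)"] assms by (simp add: prime_gt_0_nat)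
  then have "(t mod int p) ^ p mod int p = t mod int p mod int p"
    by (simp only: mod_eq_dvd_iff)
  then have "t ^ p mod int p = t mod int p"
    by (simp add: power_mod)
  then show ?thesis
    by (simp add: mod_eq_dvd_iff)
qed

lemma power_add_inverse_power_in_Ints:
  fixes u :: "'a :: field"
  assumes "u \<noteq> 0" and "u + inverse u \<in> \<int>"
  shows "u ^ j + inverse u ^ j \<in> \<int>"
proof -
  let ?t = "\<lambda>j. u ^ j + inverse u ^ j"
  have rec: "?t (Suc (Suc j)) = ?t 1 * ?t (Suc j) - ?t j" for j
    using assms(1) by (simp add: field_simps)
  have "?t j \<in> \<int> \<and> ?t (Suc j) \<in> \<int>"
    by (induction j) (use assms(2) rec in \<open>auto intro: Ints_diff Ints_mult\<close>)
  then show ?thesis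
    by blast
qed

lemma infinite_Dirichlet_approximations:
  fixes \<theta> :: real
  assumes "\<theta> \<notin> \<rat>"
  shows "infinite {(h :: int, k :: int). k > 0 \<and> \<bar>of_int k * \<theta> - of_int h\<bar> < 1 / of_int k}"
    (is "infinite ?S")
proof
  assume fin: "finite ?S"
  define F where "F = (\<lambda>(h :: int, k :: int). \<bar>of_int k * \<theta> - of_int h\<bar>)"
  have F_pos: "F a > 0" if a_in: "a \<in> ?S" for a
  proof -
    obtain h k where a: "a = (h, k)" and "k > 0"
      using a_in by (cases a) auto
    have "of_int k * \<theta> \<noteq> of_int h"
    proof
      assume "of_int k * \<theta> = of_int h"
      with \<open>k > 0\<close> have "\<theta> = of_int h / of_int k"
        by (simp add: field_simps)
      with assms show False
        by simp
    qed
    then show ?thesis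
      by (simp add: F_def a)
  qed
  define m where "m = Min (insert 1 (F ` ?S))"
  have "m > 0"
    unfolding m_def using fin F_pos by (subst Min_gr_iff) auto
  have m_le: "m \<le> F a" if "a \<in> ?S" for a
    unfolding m_def using fin that by (intro Min_le) auto
  \<comment> \<open>Dirichlet's theorem with \<open>N > 1/m\<close> gives an approximation better than all of them\<close>
  define N where "N = nat \<lceil>1 / m\<rceil> + 1"
  have "N > 0"
    by (simp add: N_def)
  have "real N > 1 / m"
    unfolding N_def by linarith
  then have N_m: "1 / real N < m"
    using \<open>m > 0\<close> \<open>N > 0\<close> by (simp add: field_simps)
  obtain h k where hk: "0 < k" "k \<le> int N" "\<bar>of_int k * \<theta> - of_int h\<bar> < 1 / real N"
    using Dirichlet_approx[OF \<open>N > 0\<close>, of \<theta>] by blast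
  have "1 / real N \<le> 1 / of_int k"
    using hk by (simp add: frac_le)
  then have "(h, k) \<in> ?S"
    using hk by auto
  then have "m \<le> \<bar>of_int k * \<theta> - of_int h\<bar>"
    using m_le by (force simp: F_def)
  with hk(3) N_m show False
    by simp
qed

section \<open>The ring of integers of \<open>\<rat>(\<surd>D)\<close>\<close>

locale real_quadratic_field =
  fixes D :: int
  assumes D_ge_2: "D \<ge> 2" and squarefree_D: "squarefree D"
begin

abbreviation sqrtD :: real where
  "sqrtD \<equiv> sqrt (real_of_int D)"

lemma sqrtD_gt_1: "sqrtD > 1"
  using D_ge_2 by simp

lemma abs_D [simp]: "\<bar>real_of_int D\<bar> = of_int D"
  using D_ge_2 by simp

lemma sqrtD_irrational: "sqrtD \<notin> \<rat>"
proof
  assume "sqrtD \<in> \<rat>"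
  then have "inverse sqrtD \<in> \<rat>"
    by simp
  moreover have "of_int D * (inverse sqrtD) ^ 2 = 1"
    using D_ge_2 by (simp add: power_inverse)
  ultimately have "inverse sqrtD \<in> \<int>"
    using squarefree_mult_square_in_Ints[OF squarefree_D, of "inverse sqrtD"] by simp
  then obtain z :: int where z: "inverse sqrtD = of_int z"
    by (auto elim: Ints_cases)
  have "0 < inverse sqrtD" "inverse sqrtD < 1"
    using sqrtD_gt_1 by (auto simp: inverse_less_1_iff)
  then show False
    unfolding z by simp
qed

lemma QK_coords_unique:
  assumes "a \<in> \<rat>" "b \<in> \<rat>" "c \<in> \<rat>" "d \<in> \<rat>" and "a + b * sqrtD = c + d * sqrtD"
  shows "a = c" and "b = d"
proof -
  show "b = d"
  proof (rule ccontr)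
    assume "b \<noteq> d"
    moreover have "(b - d) * sqrtD = c - a"
      using assms(5) by (simp add: algebra_simps)
    ultimately have "sqrtD = (c - a) / (b - d)"
      by (simp add: eq_divide_eq mult.commute)
    with assms(1-4) sqrtD_irrational show False
      by simp
  qed
  with assms(5) show "a = c"
    by simp
qed

lemma QK_iff: "x \<in> QK D \<longleftrightarrow> (\<exists>a\<in>\<rat>. \<exists>b\<in>\<rat>. x = a + b * sqrtD)"
  unfolding QK_def by (auto simp: Rats_def)

lemma QK_cases:
  assumes "x \<in> QK D"
  obtains a b where "a \<in> \<rat>" "b \<in> \<rat>" "x = a + b * sqrtD"
  using assms unfolding QK_iff by blast

lemma QK_coordsI: "a \<in> \<rat> \<Longrightarrow> b \<in> \<rat> \<Longrightarrow> a + b * sqrtD \<in> QK D"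
  unfolding QK_iff by blast

lemma QK_add:
  assumes "x \<in> QK D" "y \<in> QK D"
  shows "x + y \<in> QK D"
proof -
  obtain a b c d where "a \<in> \<rat>" "b \<in> \<rat>" "x = a + b * sqrtD"
    and "c \<in> \<rat>" "d \<in> \<rat>" "y = c + d * sqrtD"
    using assms by (elim QK_cases)
  moreover have "(a + b * sqrtD) + (c + d * sqrtD) = (a + c) + (b + d) * sqrtD"
    by (simp add: algebra_simps)
  ultimately show ?thesis
    by (metis QK_coordsI Rats_add)
qed

lemma mult_coords:
  "(a + b * sqrtD) * (c + d * sqrtD) = (a * c + of_int D * b * d) + (a * d + b * c) * sqrtD"
proof -
  have "(a + b * sqrtD) * (c + d * sqrtD) = a * c + b * d * (sqrtD * sqrtD) + (a * d + b * c) * sqrtD"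
    by (simp add: algebra_simps)
  then show ?thesis
    by simp
qed

lemma QK_mult:
  assumes "x \<in> QK D" "y \<in> QK D"
  shows "x * y \<in> QK D"
proof -
  obtain a b c d where "a \<in> \<rat>" "b \<in> \<rat>" "x = a + b * sqrtD"
    and "c \<in> \<rat>" "d \<in> \<rat>" "y = c + d * sqrtD"
    using assms by (elim QK_cases)
  moreover from this have "x * y = (a * c + of_int D * b * d) + (a * d + b * c) * sqrtD"
    by (simp only: mult_coords)
  ultimately show ?thesis
    by (simp only: QK_coordsI Rats_add Rats_mult Rats_of_int)
qed

lemma QK_of_int [simp]: "of_int n \<in> QK D"
  unfolding QK_iff by (intro bexI[of _ "of_int n"] bexI[of _ 0]) auto

lemma QK_power: "x \<in> QK D \<Longrightarrow> x ^ n \<in> QK D"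
  by (induction n) (auto intro: QK_mult simp: QK_of_int[of 1, simplified])

lemma conjK_coords:
  assumes "a \<in> \<rat>" "b \<in> \<rat>"
  shows "conjK D (a + b * sqrtD) = a - b * sqrtD"
proof -
  obtain a' b' where a': "a = of_rat a'" and b': "b = of_rat b'"
    using assms by (auto elim!: Rats_cases)
  show ?thesis
    unfolding conjK_def
  proof (rule the_equality)
    show "\<exists>a'' b''. a + b * sqrtD = of_rat a'' + of_rat b'' * sqrtD
                   \<and> a - b * sqrtD = of_rat a'' - of_rat b'' * sqrtD"
      using a' b' by blast
  next
    fix y
    assume "\<exists>a'' b''. a + b * sqrtD = of_rat a'' + of_rat b'' * sqrtD
                     \<and> y = of_rat a'' - of_rat b'' * sqrtD"
    then obtain a'' b'' where eq: "a + b * sqrtD = of_rat a'' + of_rat b'' * sqrtD"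
      and y: "y = of_rat a'' - of_rat b'' * sqrtD"
      by blast
    have "a = of_rat a''" "b = of_rat b''"
      using QK_coords_unique[OF assms _ _ eq] by auto
    with y show "y = a - b * sqrtD"
      by simp
  qed
qed

lemma normK_coords:
  assumes "a \<in> \<rat>" "b \<in> \<rat>"
  shows "normK D (a + b * sqrtD) = a ^ 2 - of_int D * b ^ 2"
proof -
  have "(a + b * sqrtD) * (a - b * sqrtD) = a * a - b * b * (sqrtD * sqrtD)"
    by (simp add: algebra_simps)
  then show ?thesis
    using assms by (simp add: normK_def conjK_coords power2_eq_square)
qed

lemma conjK_add:
  assumes "x \<in> QK D" "y \<in> QK D"
  shows "conjK D (x + y) = conjK D x + conjK D y"
proof -
  obtain a b c d where ab: "a \<in> \<rat>" "b \<in> \<rat>" "x = a + b * sqrtD"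
    and cd: "c \<in> \<rat>" "d \<in> \<rat>" "y = c + d * sqrtD"
    using assms unfolding QK_iff by blast
  have "x + y = (a + c) + (b + d) * sqrtD"
    by (simp add: ab cd algebra_simps)
  then have "conjK D (x + y) = (a + c) - (b + d) * sqrtD"
    using ab cd by (simp only: conjK_coords Rats_add)
  then show ?thesis
    using ab cd by (simp add: conjK_coords algebra_simps)
qed

lemma conjK_mult:
  assumes "x \<in> QK D" "y \<in> QK D"
  shows "conjK D (x * y) = conjK D x * conjK D y"
proof -
  obtain a b c d where ab: "a \<in> \<rat>" "b \<in> \<rat>" "x = a + b * sqrtD"
    and cd: "c \<in> \<rat>" "d \<in> \<rat>" "y = c + d * sqrtD"
    using assms unfolding QK_iff by blast
  have "conjK D x * conjK D y = (a + (- b) * sqrtD) * (c + (- d) * sqrtD)"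
    using ab cd by (simp add: conjK_coords)
  also have "\<dots> = (a * c + of_int D * b * d) - (a * d + b * c) * sqrtD"
    unfolding mult_coords by (simp add: algebra_simps)
  also have "\<dots> = conjK D (x * y)"
    using ab cd by (simp only: mult_coords conjK_coords Rats_add Rats_mult Rats_of_int)
  finally show ?thesis ..
qed

lemma conjK_of_int [simp]: "conjK D (of_int n) = of_int n"
  using conjK_coords[of "of_int n" 0] by simp

lemma normK_of_int [simp]: "normK D (of_int n) = of_int n ^ 2"
  by (simp add: normK_def power2_eq_square)

lemma conjK_1 [simp]: "conjK D 1 = 1" and normK_1 [simp]: "normK D 1 = 1"
  using conjK_of_int[of 1] normK_of_int[of 1] by simp_all

lemma normK_mult: "x \<in> QK D \<Longrightarrow> y \<in> QK D \<Longrightarrow> normK D (x * y) = normK D x * normK D y"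
  by (simp add: normK_def conjK_mult mult_ac)

lemma normK_power: "x \<in> QK D \<Longrightarrow> normK D (x ^ n) = normK D x ^ n"
  by (induction n) (simp_all add: normK_mult QK_power)

lemma OK_powers_bounded_denominators:
  assumes "x \<in> OK D"
  obtains c :: int where "c > 0" and "\<And>k. \<exists>A\<in>\<int>. \<exists>B\<in>\<int>. of_int c * x ^ k = A + B * sqrtD"
proof -
  have x: "x \<in> QK D" "algebraic_int x"
    using assms by (auto simp: OK_def)
  obtain n where span: "\<And>k. \<exists>z::nat \<Rightarrow> int. x ^ k = (\<Sum>i<n. of_int (z i) * x ^ i)"
    using algebraic_int_powers_in_finite_span[OF x(2)] by blast
  have "\<forall>i. \<exists>a b. a \<in> \<rat> \<and> b \<in> \<rat> \<and> x ^ i = a + b * sqrtD"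
    using QK_power[OF x(1)] unfolding QK_iff by blast
  then obtain a b where ab: "\<And>i. a i \<in> \<rat>" "\<And>i. b i \<in> \<rat>" "\<And>i. x ^ i = a i + b i * sqrtD"
    by metis
  obtain c :: int where c: "c > 0" "\<forall>q \<in> a ` {..<n} \<union> b ` {..<n}. of_int c * q \<in> \<int>"
    using Rats_common_denominator[of "a ` {..<n} \<union> b ` {..<n}"] ab(1,2) by auto
  have ca: "of_int c * a i \<in> \<int>" and cb: "of_int c * b i \<in> \<int>" if "i < n" for i
    using c(2) that by auto
  show ?thesis
  proof (rule that[OF c(1)])
    fix k
    obtain z where "x ^ k = (\<Sum>i<n. of_int (z i) * x ^ i)"
      using span by blast
    then have eq: "of_int c * x ^ k = (\<Sum>i<n. of_int (z i) * (of_int c * a i))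
                                  + (\<Sum>i<n. of_int (z i) * (of_int c * b i)) * sqrtD"
      by (simp add: ab(3) sum_distrib_left sum_distrib_right sum.distrib algebra_simps)
    have "(\<Sum>i<n. of_int (z i) * (of_int c * a i)) \<in> \<int>"
      by (rule Ints_sum, rule Ints_mult) (simp_all add: ca)
    moreover have "(\<Sum>i<n. of_int (z i) * (of_int c * b i)) \<in> \<int>"
      by (rule Ints_sum, rule Ints_mult) (simp_all add: cb)
    ultimately show "\<exists>A\<in>\<int>. \<exists>B\<in>\<int>. of_int c * x ^ k = A + B * sqrtD"
      using eq by blast
  qed
qed

lemma OK_normK_in_Ints:
  assumes "x \<in> OK D"
  shows "normK D x \<in> \<int>"
proof -
  have x: "x \<in> QK D"
    using assms by (auto simp: OK_def)
  obtain c :: int where c: "c > 0" "\<And>k. \<exists>A\<in>\<int>. \<exists>B\<in>\<int>. of_int c * x ^ k = A + B * sqrtD"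
    using OK_powers_bounded_denominators[OF assms] by blast
  have "of_int (c ^ 2) * normK D x ^ k \<in> \<int>" for k
  proof -
    obtain A B where AB: "A \<in> \<int>" "B \<in> \<int>" "of_int c * x ^ k = A + B * sqrtD"
      using c(2) by blast
    have "of_int (c ^ 2) * normK D x ^ k = normK D (of_int c * x ^ k)"
      using x by (simp add: normK_mult normK_power QK_power)
    also have "\<dots> = A ^ 2 - of_int D * B ^ 2"
      using AB(1,2) Ints_subset_Rats normK_coords[of A B] by (auto simp: AB(3))
    also have "\<dots> \<in> \<int>"
      using AB by (intro Ints_diff Ints_mult Ints_power) auto
    finally show ?thesis .
  qed
  moreover have "normK D x \<in> \<rat>"
    using x by (auto simp: normK_coords elim!: QK_cases)
  ultimately show ?thesis
    using c(1) Ints_if_bounded_power_denominators[of "normK D x" "c ^ 2"] by simp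
qed

lemma OK_trace_in_Ints:
  assumes "x \<in> OK D"
  shows "x + conjK D x \<in> \<int>"
proof -
  have x: "x \<in> QK D" "algebraic_int x"
    using assms by (auto simp: OK_def)
  have "x + 1 \<in> OK D"
    using x QK_add[OF x(1) QK_of_int[of 1]] algebraic_int_add_of_int[of x 1]
    by (simp add: OK_def)
  have "normK D (x + 1) = normK D x + (x + conjK D x) + 1"
    using x(1) QK_of_int[of 1] by (simp add: normK_def conjK_add algebra_simps)
  then have "x + conjK D x = normK D (x + 1) - normK D x - 1"
    by simp
  also have "\<dots> \<in> \<int>"
    using OK_normK_in_Ints[OF \<open>x + 1 \<in> OK D\<close>] OK_normK_in_Ints[OF assms] by simp
  finally show ?thesis .
qed

definition half_elt :: "int \<Rightarrow> int \<Rightarrow> real" where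
  "half_elt A B = (of_int A + of_int B * sqrtD) / 2"

lemma half_elt_coords: "half_elt A B = of_int A / 2 + (of_int B / 2) * sqrtD"
  by (simp add: half_elt_def add_divide_distrib)

lemma half_elt_in_QK: "half_elt A B \<in> QK D"
  unfolding half_elt_coords by (intro QK_coordsI) simp_all

lemma conjK_half_elt: "conjK D (half_elt A B) = half_elt A (- B)"
  using conjK_coords[of "of_int A / 2" "of_int B / 2"] by (simp add: half_elt_coords)

lemma normK_half_elt: "normK D (half_elt A B) = of_int (A ^ 2 - D * B ^ 2) / 4"
  using normK_coords[of "of_int A / 2" "of_int B / 2"]
  by (simp add: half_elt_coords power_divide)

lemma half_elt_add: "half_elt A B + half_elt A' B' = half_elt (A + A') (B + B')"
  by (simp add: half_elt_def add_divide_distrib[symmetric] algebra_simps)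

lemma half_elt_mult:
  "2 * (half_elt A B * half_elt A' B') = half_elt (A * A' + D * B * B') (A * B' + A' * B)"
  using mult_coords[of "of_int A" "of_int B" "of_int A'" "of_int B'"]
  by (simp add: half_elt_def algebra_simps)

lemma half_elt_algebraic_int:
  assumes "4 dvd A ^ 2 - D * B ^ 2"
  shows "algebraic_int (half_elt A B)"
proof -
  obtain N where N: "A ^ 2 - D * B ^ 2 = 4 * N"
    using assms by blast
  \<comment> \<open>the minimal polynomial \<open>X\<^sup>2 - A X + N\<close>, with \<open>A\<close> the trace and \<open>N\<close> the norm\<close>
  define P where "P = [:of_int N, - of_int A, 1 :: real:]"
  have "4 * poly P (half_elt A B) = 4 * of_int N - of_int (A ^ 2 - D * B ^ 2)"
    by (simp add: P_def half_elt_def field_simps power2_eq_square)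
  then have "poly P (half_elt A B) = 0"
    by (simp add: N)
  moreover have "lead_coeff P = 1" "\<forall>i. coeff P i \<in> \<int>"
    by (auto simp: P_def coeff_pCons split: nat.split)
  ultimately show ?thesis
    by (intro algebraic_int.intros)
qed

lemma OK_iff_half_elt: "x \<in> OK D \<longleftrightarrow> (\<exists>A B. x = half_elt A B \<and> 4 dvd A ^ 2 - D * B ^ 2)"
proof
  assume x: "x \<in> OK D"
  then obtain a b where ab: "a \<in> \<rat>" "b \<in> \<rat>" "x = a + b * sqrtD"
    by (auto simp: OK_def elim: QK_cases)
  have "x + conjK D x = 2 * a"
    using ab by (simp add: conjK_coords)
  then obtain A where A: "2 * a = of_int A"
    using OK_trace_in_Ints[OF x] by (auto elim: Ints_cases)
  obtain N where N: "normK D x = of_int N"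
    using OK_normK_in_Ints[OF x] by (auto elim: Ints_cases)
  have norm4: "4 * normK D x = (2 * a) ^ 2 - of_int D * (2 * b) ^ 2"
    using ab by (simp add: normK_coords power_mult_distrib)
  then have "of_int D * (2 * b) ^ 2 = of_int (A ^ 2 - 4 * N)"
    by (simp add: A N)
  then have "2 * b \<in> \<int>"
    using squarefree_mult_square_in_Ints[OF squarefree_D, of "2 * b"] ab(2) by simp
  then obtain B where B: "2 * b = of_int B"
    by (auto elim: Ints_cases)
  have "x = half_elt A B"
    using A B ab(3) by (simp add: half_elt_def field_simps)
  moreover have "of_int (A ^ 2 - D * B ^ 2) = (of_int (4 * N) :: real)"
    using norm4 by (simp add: A B N)
  then have "4 dvd A ^ 2 - D * B ^ 2"
    by (metis dvd_triv_left of_int_eq_iff)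
  ultimately show "\<exists>A B. x = half_elt A B \<and> 4 dvd A ^ 2 - D * B ^ 2"
    by blast
next
  assume "\<exists>A B. x = half_elt A B \<and> 4 dvd A ^ 2 - D * B ^ 2"
  then show "x \<in> OK D"
    using half_elt_in_QK half_elt_algebraic_int by (auto simp: OK_def)
qed

lemma half_elt_parity: "4 dvd A ^ 2 - D * B ^ 2 \<Longrightarrow> even (A - D * B)"
proof -
  assume "4 dvd A ^ 2 - D * B ^ 2"
  then have "even (A ^ 2 - D * B ^ 2)"
    by (rule dvd_trans[rotated]) simp
  then show "even (A - D * B)"
    by (auto simp: power2_eq_square)
qed

lemma OK_add:
  assumes "x \<in> OK D" "y \<in> OK D"
  shows "x + y \<in> OK D"
proof -
  obtain A B A' B' where x: "x = half_elt A B" "4 dvd A ^ 2 - D * B ^ 2"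
    and y: "y = half_elt A' B'" "4 dvd A' ^ 2 - D * B' ^ 2"
    using assms by (auto simp: OK_iff_half_elt)
  have "even (A - D * B)" "even (A' - D * B')"
    using half_elt_parity x(2) y(2) by blast+
  then have "even (A * A' - D * B * B')"
    by auto
  then obtain j where "A * A' - D * B * B' = 2 * j"
    by blast
  then have "4 dvd 2 * (A * A' - D * B * B')"
    by simp
  moreover have "(A + A') ^ 2 - D * (B + B') ^ 2
      = (A ^ 2 - D * B ^ 2) + (A' ^ 2 - D * B' ^ 2) + 2 * (A * A' - D * B * B')"
    by (simp add: power2_eq_square algebra_simps)
  ultimately have "4 dvd (A + A') ^ 2 - D * (B + B') ^ 2"
    using x(2) y(2) by simp
  then show ?thesis
    unfolding OK_iff_half_elt x y half_elt_add by blast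
qed

lemma OK_mult:
  assumes "x \<in> OK D" "y \<in> OK D"
  shows "x * y \<in> OK D"
proof -
  obtain A B A' B' where x: "x = half_elt A B" "4 dvd A ^ 2 - D * B ^ 2"
    and y: "y = half_elt A' B'" "4 dvd A' ^ 2 - D * B' ^ 2"
    using assms by (auto simp: OK_iff_half_elt)
  have "even (A - D * B)" "even (A' - D * B')"
    using half_elt_parity x(2) y(2) by blast+
  then have "even (A * A' + D * B * B')" "even (A * B' + A' * B)"
    by auto
  then obtain X Y where X: "A * A' + D * B * B' = 2 * X" and Y: "A * B' + A' * B = 2 * Y"
    by blast
  have "2 * (x * y) = half_elt (2 * X) (2 * Y)"
    using half_elt_mult[of A B A' B'] by (simp add: x y X Y)
  also have "\<dots> = 2 * half_elt X Y"
    by (simp add: half_elt_def)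
  finally have xy: "x * y = half_elt X Y"
    by simp
  have "4 * (X ^ 2 - D * Y ^ 2) = (2 * X) ^ 2 - D * (2 * Y) ^ 2"
    by (simp add: power2_eq_square algebra_simps)
  also have "\<dots> = (A ^ 2 - D * B ^ 2) * (A' ^ 2 - D * B' ^ 2)"
    unfolding X[symmetric] Y[symmetric] by (simp add: power2_eq_square algebra_simps)
  finally have "4 * 4 dvd 4 * (X ^ 2 - D * Y ^ 2)"
    using mult_dvd_mono[OF x(2) y(2)] by simp
  then have "4 dvd X ^ 2 - D * Y ^ 2"
    by (metis dvd_times_left_cancel_iff zero_neq_numeral)
  then show ?thesis
    unfolding OK_iff_half_elt xy by blast
qed

lemma OK_of_int [simp]: "of_int n \<in> OK D"
proof -
  have "of_int n = half_elt (2 * n) 0"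
    by (simp add: half_elt_def)
  moreover have "4 dvd (2 * n) ^ 2 - D * 0 ^ 2"
    by (simp add: power2_eq_square)
  ultimately show ?thesis
    unfolding OK_iff_half_elt by blast
qed

lemma OK_0 [simp]: "0 \<in> OK D" and OK_1 [simp]: "1 \<in> OK D"
  using OK_of_int[of 0] OK_of_int[of 1] by simp_all

lemma OK_uminus: "x \<in> OK D \<Longrightarrow> - x \<in> OK D"
  using OK_mult[OF OK_of_int[of "-1"], of x] by simp

lemma OK_diff: "x \<in> OK D \<Longrightarrow> y \<in> OK D \<Longrightarrow> x - y \<in> OK D"
  using OK_add[of x "- y"] OK_uminus[of y] by simp

lemma OK_power: "x \<in> OK D \<Longrightarrow> x ^ n \<in> OK D"
  by (induction n) (auto intro: OK_mult)

lemma OK_sum: "(\<And>i. i \<in> I \<Longrightarrow> f i \<in> OK D) \<Longrightarrow> sum f I \<in> OK D"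
  by (induction I rule: infinite_finite_induct) (auto intro: OK_add)

section \<open>Pell's equation and the fundamental unit\<close>

lemma norm_form_eq_0D:
  fixes h k :: int
  assumes "h ^ 2 = D * k ^ 2"
  shows "k = 0"
proof (rule ccontr)
  assume "k \<noteq> 0"
  have "real_of_int h ^ 2 = of_int D * of_int k ^ 2"
    using assms by (metis of_int_eq_iff of_int_mult of_int_power)
  then have "sqrt (real_of_int h ^ 2) = sqrtD * sqrt (of_int k ^ 2)"
    by (simp add: real_sqrt_mult)
  then have "sqrtD = \<bar>of_int h\<bar> / \<bar>of_int k\<bar>"
    using \<open>k \<noteq> 0\<close> by (simp add: field_simps)
  then show False
    using sqrtD_irrational by simp
qed

lemma norm_form_bound_of_approximation:
  fixes h k :: int
  assumes k: "k > 0" and approx: "\<bar>of_int k * sqrtD - of_int h\<bar> < 1 / of_int k"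
  shows "\<bar>h ^ 2 - D * k ^ 2\<bar> \<le> \<lceil>1 + 2 * sqrtD\<rceil>"
proof -
  define e where "e = of_int k * sqrtD - of_int h"
  have "1 / real_of_int k \<le> 1"
    using k by simp
  have "\<bar>of_int h + of_int k * sqrtD\<bar> = \<bar>2 * of_int k * sqrtD - e\<bar>"
    by (simp add: e_def)
  also have "\<dots> \<le> 2 * of_int k * sqrtD + \<bar>e\<bar>"
    using k sqrtD_gt_1 abs_triangle_ineq4[of "2 * of_int k * sqrtD" e] by simp
  finally have sum_bound: "\<bar>of_int h + of_int k * sqrtD\<bar> \<le> 2 * of_int k * sqrtD + 1 / of_int k"
    using approx e_def by linarith
  have "real_of_int (h ^ 2 - D * k ^ 2) = - e * (of_int h + of_int k * sqrtD)"
    by (simp add: e_def algebra_simps power2_eq_square)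
  then have "\<bar>real_of_int (h ^ 2 - D * k ^ 2)\<bar> = \<bar>e\<bar> * \<bar>of_int h + of_int k * sqrtD\<bar>"
    by (simp add: abs_mult)
  also have "\<dots> \<le> (1 / of_int k) * (2 * of_int k * sqrtD + 1 / of_int k)"
    using approx sum_bound k by (intro mult_mono) (auto simp: e_def)
  also have "\<dots> = 2 * sqrtD + 1 / of_int k * (1 / of_int k)"
    using k by (simp add: field_simps)
  also have "\<dots> \<le> 2 * sqrtD + 1"
    using mult_le_one[OF \<open>1 / real_of_int k \<le> 1\<close> _ \<open>1 / real_of_int k \<le> 1\<close>] k by simp
  finally show ?thesis
    by linarith
qed

lemma pell_solution_from_congruent_pair:
  fixes h1 k1 h2 k2 n :: int
  assumes n1: "h1 ^ 2 - D * k1 ^ 2 = n" and n2: "h2 ^ 2 - D * k2 ^ 2 = n" and "n \<noteq> 0"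
    and h: "n dvd h1 - h2" and k: "n dvd k1 - k2"
    and pos: "k1 > 0" "k2 > 0" and ne: "(h1, k1) \<noteq> (h2, k2)"
  shows "\<exists>X Y. X ^ 2 - D * Y ^ 2 = 1 \<and> Y \<noteq> 0"
proof -
  \<comment> \<open>\<open>X0 + Y0 \<surd>D = (h1 + k1 \<surd>D)(h2 - k2 \<surd>D)\<close>, divisible by \<open>n\<close> thanks to the congruences\<close>
  define X0 where "X0 = h1 * h2 - D * k1 * k2"
  define Y0 where "Y0 = k1 * h2 - h1 * k2"
  have "X0 = n + h2 * (h1 - h2) - D * k2 * (k1 - k2)"
    using n2 by (simp add: X0_def power2_eq_square algebra_simps)
  then have "n dvd X0"
    using h k by simp
  then obtain X where X: "X0 = n * X"
    by blast
  have "Y0 = h2 * (k1 - k2) - k2 * (h1 - h2)"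
    by (simp add: Y0_def algebra_simps)
  then have "n dvd Y0"
    using h k by simp
  then obtain Y where Y: "Y0 = n * Y"
    by blast
  have "X0 ^ 2 - D * Y0 ^ 2 = (h1 ^ 2 - D * k1 ^ 2) * (h2 ^ 2 - D * k2 ^ 2)"
    by (simp add: X0_def Y0_def power2_eq_square algebra_simps)
  then have "(n * X) ^ 2 - D * (n * Y) ^ 2 = n * n"
    by (simp only: n1 n2 X Y)
  then have "n ^ 2 * (X ^ 2 - D * Y ^ 2) = n ^ 2 * 1"
    by algebra
  then have XY: "X ^ 2 - D * Y ^ 2 = 1"
    using \<open>n \<noteq> 0\<close> by simp
  have "Y \<noteq> 0"
  proof
    assume "Y = 0"
    then have e: "k1 * h2 = h1 * k2"
      using Y by (simp add: Y0_def)
    have "k2 ^ 2 * n = (k2 * h1) ^ 2 - D * k1 ^ 2 * k2 ^ 2"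
      using n1 by (simp add: power_mult_distrib algebra_simps)
    also have "\<dots> = k1 ^ 2 * n"
      using n2 e by (simp add: power_mult_distrib algebra_simps flip: e)
    finally have "k1 = k2"
      using \<open>n \<noteq> 0\<close> pos power2_eq_iff_nonneg[of k2 k1] by simp
    with e pos ne show False
      by simp
  qed
  with XY show ?thesis
    by blast
qed

lemma congruent_approximation_pair:
  obtains h1 k1 h2 k2 n :: int
  where "h1 ^ 2 - D * k1 ^ 2 = n" "h2 ^ 2 - D * k2 ^ 2 = n" "n \<noteq> 0"
    and "n dvd h1 - h2" "n dvd k1 - k2" "k1 > 0" "k2 > 0" "(h1, k1) \<noteq> (h2, k2)"
proof -
  define S where "S = {(h :: int, k :: int). k > 0 \<and> \<bar>of_int k * sqrtD - of_int h\<bar> < 1 / of_int k}"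
  have "infinite S"
    unfolding S_def using sqrtD_irrational by (rule infinite_Dirichlet_approximations)
  define K where "K = \<lceil>1 + 2 * sqrtD\<rceil>"
  define norm where "norm = (\<lambda>(h, k). h ^ 2 - D * k ^ 2)"
  have norm_S: "\<bar>norm a\<bar> \<le> K" "norm a \<noteq> 0" if "a \<in> S" for a
    using that norm_form_bound_of_approximation
    by (auto simp: S_def norm_def K_def dest: norm_form_eq_0D)
  \<comment> \<open>pigeonhole: infinitely many approximations share the norm and the residues modulo it\<close>
  define g where "g = (\<lambda>(h, k). (norm (h, k), h mod norm (h, k), k mod norm (h, k)))"
  have "g ` S \<subseteq> {-K..K} \<times> {-K..K} \<times> {-K..K}"
  proof
    fix y assume "y \<in> g ` S"
    then obtain h k where hk: "(h, k) \<in> S" and y: "y = g (h, k)"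
      by auto
    define n where "n = norm (h, k)"
    have n: "\<bar>n\<bar> \<le> K" "n \<noteq> 0"
      using norm_S[OF hk] by (simp_all add: n_def)
    then have "\<bar>h mod n\<bar> \<le> K" "\<bar>k mod n\<bar> \<le> K"
      using abs_mod_less[of n h] abs_mod_less[of n k] by linarith+
    with n show "y \<in> {-K..K} \<times> {-K..K} \<times> {-K..K}"
      by (simp add: y g_def n_def[symmetric] abs_le_iff)
  qed
  then have "finite (g ` S)"
    by (rule finite_subset) simp
  from pigeonhole_infinite[OF \<open>infinite S\<close> this] obtain a0
    where a0: "a0 \<in> S" "infinite {a \<in> S. g a = g a0}"
    by blast
  then have "{a \<in> S. g a = g a0} - {a0} \<noteq> {}"
    by (metis finite.emptyI infinite_remove)
  then obtain a1 where a1: "a1 \<in> S" "g a1 = g a0" "a1 \<noteq> a0"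
    by auto
  obtain h1 k1 h2 k2 where a: "a1 = (h1, k1)" "a0 = (h2, k2)"
    by (cases a1, cases a0)
  define n where "n = h2 ^ 2 - D * k2 ^ 2"
  have same: "h1 ^ 2 - D * k1 ^ 2 = n" "h1 mod n = h2 mod n" "k1 mod n = k2 mod n"
    using a1(2) unfolding a g_def norm_def n_def by auto
  show ?thesis
  proof (rule that[OF same(1) n_def[symmetric]])
    show "n \<noteq> 0"
      using norm_S(2)[OF a0(1)] by (simp add: a norm_def n_def)
    show "n dvd h1 - h2" "n dvd k1 - k2"
      using same(2,3) by (simp_all add: mod_eq_dvd_iff)
    show "k1 > 0" "k2 > 0"
      using a0(1) a1(1) by (auto simp: a S_def)
    show "(h1, k1) \<noteq> (h2, k2)"
      using a1(3) by (simp add: a)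
  qed
qed

lemma pell_nontrivial_solution: "\<exists>X Y. X ^ 2 - D * Y ^ 2 = 1 \<and> Y \<noteq> 0"
  using congruent_approximation_pair pell_solution_from_congruent_pair by metis

lemma exists_unit_gt_1: "\<exists>u \<in> unitsOK D. u > 1"
proof -
  obtain X Y where XY: "X ^ 2 - D * Y ^ 2 = 1" "Y \<noteq> 0"
    using pell_nontrivial_solution by blast
  then have XY': "\<bar>X\<bar> ^ 2 - D * \<bar>Y\<bar> ^ 2 = 1"
    by simp
  have "X \<noteq> 0"
  proof
    assume "X = 0"
    with XY(1) have "D * Y ^ 2 = -1"
      by simp
    moreover have "D * Y ^ 2 \<ge> 0"
      using D_ge_2 by simp
    ultimately show False
      by simp
  qed
  define u where "u = half_elt (2 * \<bar>X\<bar>) (2 * \<bar>Y\<bar>)"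
  define w where "w = half_elt (2 * \<bar>X\<bar>) (- (2 * \<bar>Y\<bar>))"
  have four: "(2 * \<bar>X\<bar>) ^ 2 - D * (2 * \<bar>Y\<bar>) ^ 2 = 4"
    using XY' by (simp add: power_mult_distrib algebra_simps)
  have "u * w = normK D u"
    by (simp add: u_def w_def normK_def conjK_half_elt)
  also have "\<dots> = 1"
    unfolding u_def normK_half_elt four by simp
  finally have "inverse u = w"
    by (rule inverse_unique)
  moreover have "4 dvd (2 * \<bar>X\<bar>) ^ 2 - D * (2 * \<bar>Y\<bar>) ^ 2"
    and "4 dvd (2 * \<bar>X\<bar>) ^ 2 - D * (- (2 * \<bar>Y\<bar>)) ^ 2"
    by (simp_all only: four power2_minus) simp_all
  then have "u \<in> OK D" "w \<in> OK D"
    unfolding OK_iff_half_elt u_def w_def by blast+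
  moreover have "u > 1"
  proof -
    have "u = \<bar>of_int X\<bar> + \<bar>of_int Y\<bar> * sqrtD"
      by (simp add: u_def half_elt_def)
    also have "\<dots> \<ge> 1 + 1 * 1"
      using \<open>X \<noteq> 0\<close> XY(2) sqrtD_gt_1 by (intro add_mono mult_mono) auto
    finally show ?thesis
      by simp
  qed
  ultimately show ?thesis
    by (auto simp: unitsOK_def)
qed

lemma unit_normK:
  assumes "v \<in> unitsOK D"
  shows "normK D v = 1 \<or> normK D v = -1"
proof -
  have v: "v \<in> OK D" "inverse v \<in> OK D" "v \<noteq> 0"
    using assms by (auto simp: unitsOK_def)
  obtain n m where n: "normK D v = of_int n" and m: "normK D (inverse v) = of_int m"
    using OK_normK_in_Ints[OF v(1)] OK_normK_in_Ints[OF v(2)] by (auto elim!: Ints_cases)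
  have "of_int (n * m) = normK D v * normK D (inverse v)"
    by (simp add: n m)
  also have "\<dots> = normK D (v * inverse v)"
    using v by (intro normK_mult[symmetric]) (auto simp: OK_def)
  also have "\<dots> = 1"
    using v(3) by simp
  finally have "n * m = 1"
    by (simp only: of_int_eq_1_iff)
  then show ?thesis
    by (auto simp: n zmult_eq_1_iff)
qed

lemma unit_inverse_eq:
  assumes "v \<in> unitsOK D"
  shows "inverse v = normK D v * conjK D v"
proof (rule inverse_unique)
  have "normK D v * normK D v = 1"
    using unit_normK[OF assms] by auto
  then show "v * (normK D v * conjK D v) = 1"
    by (simp add: normK_def mult_ac)
qed

lemma finite_units_le: "finite {v \<in> unitsOK D. 1 < v \<and> v \<le> c}"
proof -
  define K where "K = \<lceil>c\<rceil> + 1"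
  have "{v \<in> unitsOK D. 1 < v \<and> v \<le> c} \<subseteq> (\<lambda>(A, B). half_elt A B) ` ({-K..K} \<times> {-K..K})"
  proof
    fix v assume "v \<in> {v \<in> unitsOK D. 1 < v \<and> v \<le> c}"
    then have v: "v \<in> unitsOK D" "1 < v" "v \<le> c"
      by auto
    then obtain A B where AB: "v = half_elt A B"
      by (auto simp: unitsOK_def OK_iff_half_elt)
    \<comment> \<open>the conjugate of \<open>v\<close> is \<open>\<plusminus>1/v\<close>, so both \<open>A = v + v'\<close> and \<open>B \<surd>D = v - v'\<close> are bounded\<close>
    have "\<bar>conjK D v\<bar> = \<bar>inverse v\<bar>"
      using unit_inverse_eq[OF v(1)] unit_normK[OF v(1)] by auto
    then have conj: "\<bar>conjK D v\<bar> < 1"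
      using v(2) by (simp add: inverse_less_1_iff)
    have "of_int A = v + conjK D v" "of_int B * sqrtD = v - conjK D v"
      unfolding AB conjK_half_elt by (simp_all add: half_elt_def field_simps)
    then have "\<bar>of_int A\<bar> \<le> c + 1" "\<bar>of_int B\<bar> * sqrtD \<le> c + 1"
      using conj v(2,3) sqrtD_gt_1 by (auto simp: abs_mult abs_le_iff)
    moreover have "\<bar>real_of_int B\<bar> \<le> \<bar>of_int B\<bar> * sqrtD"
      using sqrtD_gt_1 by (simp add: mult_le_cancel_left1)
    ultimately have "\<bar>A\<bar> \<le> K" "\<bar>B\<bar> \<le> K"
      unfolding K_def by linarith+
    then show "v \<in> (\<lambda>(A, B). half_elt A B) ` ({-K..K} \<times> {-K..K})"
      by (auto simp: AB abs_le_iff intro!: image_eqI[of _ _ "(A, B)"])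
  qed
  then show ?thesis
    by (rule finite_subset) simp
qed

lemma fund_unit_spec:
  "fund_unit D \<in> unitsOK D \<and> fund_unit D > 1 \<and> (\<forall>v \<in> unitsOK D. v > 1 \<longrightarrow> fund_unit D \<le> v)"
proof -
  obtain u0 where u0: "u0 \<in> unitsOK D" "u0 > 1"
    using exists_unit_gt_1 by blast
  define U where "U = {v \<in> unitsOK D. 1 < v \<and> v \<le> u0}"
  have "finite U" "u0 \<in> U"
    using finite_units_le u0 by (auto simp: U_def)
  define e where "e = Min U"
  have e: "e \<in> unitsOK D \<and> e > 1 \<and> (\<forall>v \<in> unitsOK D. v > 1 \<longrightarrow> e \<le> v)"
  proof -
    have "e \<in> U" "e \<le> u0"
      unfolding e_def using \<open>finite U\<close> \<open>u0 \<in> U\<close> by (auto intro: Min_in)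
    moreover have "e \<le> v" if "v \<in> unitsOK D" "v > 1" for v
      using that \<open>finite U\<close> \<open>e \<le> u0\<close> by (cases "v \<le> u0") (auto simp: e_def U_def)
    ultimately show ?thesis
      by (auto simp: U_def)
  qed
  then have "fund_unit D = e"
    unfolding fund_unit_def by (rule the_equality) (use e in force)
  with e show ?thesis
    by simp
qed

lemma fund_unit_in_OK: "fund_unit D \<in> OK D"
  and inverse_fund_unit_in_OK: "inverse (fund_unit D) \<in> OK D"
  using fund_unit_spec by (auto simp: unitsOK_def)

lemma uD_in_OK: "uD D \<in> OK D"
  by (simp add: uD_def fund_unit_in_OK OK_power)

lemma inverse_uD_in_OK: "inverse (uD D) \<in> OK D"
  by (simp add: uD_def inverse_fund_unit_in_OK OK_power flip: power_inverse)

lemma uD_gt_1: "uD D > 1"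
  using fund_unit_spec by (simp add: uD_def)

lemma uD_plus_inverse_in_Ints: "uD D + inverse (uD D) \<in> \<int>"
proof -
  define e where "e = fund_unit D"
  have e: "e \<in> unitsOK D" "e \<in> OK D"
    using fund_unit_spec fund_unit_in_OK by (simp_all add: e_def)
  have trace: "e + conjK D e \<in> \<int>"
    using OK_trace_in_Ints[OF e(2)] .
  show ?thesis
  proof (cases "normK D e = -1")
    case True
    then have "uD D = e ^ 2" "inverse (uD D) = (conjK D e) ^ 2"
      using unit_inverse_eq[OF e(1)] by (simp_all add: uD_def e_def flip: power_inverse)
    moreover have "e ^ 2 + conjK D e ^ 2 = (e + conjK D e) ^ 2 + 2"
      using True by (simp add: normK_def power2_eq_square algebra_simps)
    ultimately show ?thesis
      using trace by simp
  next
    case False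
    then have "normK D e = 1"
      using unit_normK[OF e(1)] by simp
    then have "uD D = e" "inverse (uD D) = conjK D e"
      using unit_inverse_eq[OF e(1)] by (simp_all add: uD_def e_def)
    with trace show ?thesis
      by simp
  qed
qed

lemma fund_unit_sq_eq_uD_power: "\<exists>k. fund_unit D ^ 2 = uD D ^ k"
proof (cases "normK D (fund_unit D) = -1")
  case True
  then show ?thesis
    by (intro exI[of _ 1]) (simp add: uD_def)
next
  case False
  then show ?thesis
    by (intro exI[of _ 2]) (simp add: uD_def)
qed

lemma dl_in_Ints: "dl D j \<in> \<int>"
  using power_add_inverse_power_in_Ints[OF _ uD_plus_inverse_in_Ints, of j] uD_gt_1
  by (simp add: dl_def)

section \<open>Congruences modulo \<open>m \<int>\<^sub>K\<close>\<close>

lemma congOK_of_int_imp_dvd: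
  assumes "m \<noteq> 0" and "congOK D m (of_int a) (of_int b)"
  shows "m dvd a - b"
proof -
  have "(of_int (a - b) / of_int m :: real) \<in> \<int>"
    using assms(2) by (intro rational_algebraic_int_is_int) (auto simp: congOK_def OK_def)
  then obtain z where "(of_int (a - b) / of_int m :: real) = of_int z"
    by (auto elim: Ints_cases)
  then have "a - b = z * m"
    using assms(1) by (simp add: field_simps flip: of_int_mult of_int_diff)
  then show ?thesis
    by simp
qed

lemma congOK_dvd_modulus:
  assumes "m dvd n" "n \<noteq> 0" "congOK D n x y"
  shows "congOK D m x y"
proof -
  obtain k where n: "n = m * k"
    using assms(1) by blast
  then have "(x - y) / of_int m = of_int k * ((x - y) / of_int n)"
    using assms(2) by (simp add: field_simps)
  then show ?thesis
    unfolding congOK_def using OK_mult[OF OK_of_int assms(3)[unfolded congOK_def]] by simp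
qed

lemma congOK_power_1:
  assumes "x \<in> OK D" "congOK D m x 1"
  shows "congOK D m (x ^ n) 1"
proof -
  have "(x ^ n - 1) / of_int m = ((x - 1) / of_int m) * (\<Sum>i<n. x ^ i)"
    by (simp add: power_diff_1_eq)
  also have "\<dots> \<in> OK D"
    using assms by (intro OK_mult OK_sum OK_power) (auto simp: congOK_def)
  finally show ?thesis
    by (simp add: congOK_def)
qed

lemma congOK_cancel:
  assumes "y \<in> OK D" "congOK D m x 1" "congOK D m (x * y) 1"
  shows "congOK D m y 1"
proof -
  have "(y - 1) / of_int m = (x * y - 1) / of_int m - y * ((x - 1) / of_int m)"
    by (simp add: field_simps diff_divide_distrib)
  also have "\<dots> \<in> OK D"
    using assms by (intro OK_diff OK_mult) (simp_all add: congOK_def)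
  finally show ?thesis
    by (simp add: congOK_def)
qed

lemma congOK_power_lift:
  assumes "x \<in> OK D" "congOK D (int n) x 1"
  shows "congOK D (int n ^ 2) (x ^ n) 1"
proof (cases "n = 0")
  case True
  then show ?thesis
    by (simp add: congOK_def)
next
  case False
  define q where "q = real n"
  have "(\<Sum>i<n. x ^ i) / q = (\<Sum>i<n. (x ^ i - 1) / q) + 1"
    using False by (simp add: q_def sum_subtractf sum_divide_distrib[symmetric] field_simps)
  also have "\<dots> \<in> OK D"
    using congOK_power_1[OF assms] by (intro OK_add OK_sum) (auto simp: congOK_def q_def)
  finally have sum: "(\<Sum>i<n. x ^ i) / q \<in> OK D" .
  have "(x ^ n - 1) / of_int (int n ^ 2) = ((x - 1) / q) * ((\<Sum>i<n. x ^ i) / q)"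
    by (simp add: power_diff_1_eq q_def power2_eq_square)
  also have "\<dots> \<in> OK D"
    using assms(2) sum by (intro OK_mult) (simp_all add: congOK_def q_def)
  finally show ?thesis
    by (simp add: congOK_def)
qed

lemma congOK_power_iff_ord_mod_dvd:
  assumes u: "u \<in> OK D" and k: "k > 0" "congOK D m (u ^ k) 1"
  shows "congOK D m (u ^ n) 1 \<longleftrightarrow> ord_mod D m u dvd n"
proof -
  define d where "d = ord_mod D m u"
  \<comment> \<open>\<open>k\<close> is needed: without a positive exponent \<open>LEAST\<close> returns an unspecified number\<close>
  have "d > 0 \<and> congOK D m (u ^ d) 1"
    unfolding d_def ord_mod_def by (rule LeastI[of _ k]) (use k in blast)
  then have d: "d > 0" "congOK D m (u ^ d) 1"
    by blast+
  have d_least: "\<not> congOK D m (u ^ r) 1" if "0 < r" "r < d" for r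
    using not_less_Least[of r "\<lambda>n. n > 0 \<and> congOK D m (u ^ n) 1"] that
    by (auto simp: d_def ord_mod_def)
  show ?thesis
  proof
    assume n: "congOK D m (u ^ n) 1"
    have "u ^ n = (u ^ d) ^ (n div d) * u ^ (n mod d)"
      by (simp flip: power_mult power_add)
    then have "congOK D m (u ^ (n mod d)) 1"
      using n congOK_power_1[OF OK_power[OF u] d(2)] by (intro congOK_cancel[OF OK_power[OF u]]) auto
    then have "n mod d = 0"
      using d_least[of "n mod d"] d(1) by (meson mod_less_divisor neq0_conv)
    then show "ord_mod D m u dvd n"
      by (simp add: d_def mod_eq_0_iff_dvd)
  next
    assume "ord_mod D m u dvd n"
    then obtain j where "n = d * j"
      by (auto simp: d_def)
    then show "congOK D m (u ^ n) 1"
      using congOK_power_1[OF OK_power[OF u] d(2), of j] by (simp add: power_mult)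
  qed
qed

lemma power_add_prime_congOK:
  assumes "prime P" "y \<in> OK D" "z \<in> OK D"
  shows "congOK D (int P) ((y + z) ^ P) (y ^ P + z ^ P)"
proof -
  let ?S = "\<Sum>k\<in>{1..<P}. of_nat ((P choose k) div P) * y ^ k * z ^ (P - k)"
  have "((y + z) ^ P - (y ^ P + z ^ P)) / of_int (int P) = ?S"
    using power_add_prime[OF assms(1), of y z] prime_gt_0_nat[OF assms(1)] by simp
  also have "?S \<in> OK D"
    using assms(2,3) OK_of_int[of "int _"] by (intro OK_sum OK_mult OK_power) auto
  finally show ?thesis
    by (simp add: congOK_def)
qed

lemma prime_dvd_power_sum_diff:
  assumes "prime P" "y \<in> OK D" "z \<in> OK D" "y + z = of_int a" "y ^ P + z ^ P = of_int b"
  shows "int P dvd a - b"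
proof -
  have "congOK D (int P) (of_int (a ^ P)) (of_int b)"
    using power_add_prime_congOK[OF assms(1-3)] by (simp add: assms(4,5))
  then have "int P dvd a ^ P - b"
    using assms(1) by (intro congOK_of_int_imp_dvd) auto
  moreover have "int P dvd a ^ P - a"
    using prime_dvd_power_self[OF assms(1)] .
  ultimately have "int P dvd (a ^ P - b) - (a ^ P - a)"
    by (rule dvd_diff)
  then show ?thesis
    by (simp add: dvd_diff_commute)
qed

lemma prime_dvd_dl_of_dvd_dl_mult:
  assumes "prime P" and "\<exists>k. dl D (P * j) = of_int k \<and> int P dvd k"
  shows "\<exists>k. dl D j = of_int k \<and> int P dvd k"
proof -
  obtain b where b: "dl D (P * j) = of_int b" "int P dvd b"
    using assms(2) by blast
  obtain a where a: "dl D j = of_int a"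
    using dl_in_Ints by (blast elim: Ints_cases)
  define y where "y = uD D ^ j"
  define z where "z = inverse (uD D) ^ j"
  have "y + z = of_int (a - 1)" "y ^ P + z ^ P = of_int (b - 1)"
    using a b by (simp_all add: dl_def y_def z_def mult.commute flip: power_mult)
  then have "int P dvd (a - 1) - (b - 1)"
    using uD_in_OK inverse_uD_in_OK
    by (intro prime_dvd_power_sum_diff[OF assms(1)]) (simp_all add: y_def z_def OK_power)
  with b(2) have "int P dvd a"
    using dvd_add by fastforce
  with a show ?thesis
    by blast
qed

lemma fund_unit_power_congOK_of_dvd_dl:
  assumes "\<exists>k. dl D l = of_int k \<and> m dvd k"
  shows "congOK D m (fund_unit D ^ (6 * l)) 1"
proof (cases "m = 0")
  case True
  then show ?thesis
    by (simp add: congOK_def)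
next
  case False
  obtain k where k: "dl D l = of_int (m * k)"
    using assms by blast
  define x where "x = uD D ^ l"
  have x: "x \<in> OK D" "x \<noteq> 0"
    using uD_in_OK uD_gt_1 by (simp_all add: x_def OK_power)
  have "x ^ 3 - 1 = (x - 1) * x * dl D l"
    using x(2) by (simp add: dl_def x_def field_simps power3_eq_cube power_inverse)
  then have "(x ^ 3 - 1) / of_int m = (x - 1) * x * of_int k"
    using False by (simp add: k)
  also have "\<dots> \<in> OK D"
    using x(1) by (intro OK_mult OK_diff) simp_all
  finally have cong: "congOK D m (x ^ 3) 1"
    by (simp add: congOK_def)
  obtain j where j: "fund_unit D ^ 2 = uD D ^ j"
    using fund_unit_sq_eq_uD_power by blast
  have "fund_unit D ^ (6 * l) = (fund_unit D ^ 2) ^ (3 * l)"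
    by (simp flip: power_mult)
  also have "\<dots> = (x ^ 3) ^ j"
    by (simp add: j x_def ac_simps flip: power_mult)
  finally show ?thesis
    using congOK_power_1[OF OK_power[OF x(1)] cong] by simp
qed

lemma prime_not_dvd_least_dl_index:
  assumes "prime P" and "l \<ge> 1" and "\<exists>k. dl D l = of_int k \<and> int P dvd k"
    and "\<forall>j. 1 \<le> j \<and> j < l \<longrightarrow> \<not> (\<exists>k. dl D j = of_int k \<and> int P dvd k)"
  shows "\<not> P dvd l"
proof
  assume "P dvd l"
  then obtain j where j: "l = P * j" ..
  with assms(1,2) have "1 \<le> j" "j < l"
    by (auto intro: Nat.gr0I dest: prime_gt_1_nat)
  moreover have "\<exists>k. dl D j = of_int k \<and> int P dvd k"
    using prime_dvd_dl_of_dvd_dl_mult[OF assms(1)] assms(3) j by simp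
  ultimately show False
    using assms(4) by blast
qed

lemma ord_mod_prime_square_eq:
  assumes u: "u \<in> OK D" and P: "prime P"
    and n: "n > 0" "\<not> P dvd n" "congOK D (int P ^ 2) (u ^ n) 1"
  shows "ord_mod D (int P) u = ord_mod D (int P ^ 2) u"
proof -
  define m where "m = ord_mod D (int P) u"
  define M where "M = ord_mod D (int P ^ 2) u"
  have P0: "int P \<noteq> 0" "int P ^ 2 \<noteq> 0"
    using P by (simp_all add: prime_gt_0_nat)
  have "congOK D (int P) (u ^ n) 1"
    using congOK_dvd_modulus[of "int P" "int P ^ 2"] n(3) P0 by simp
  note ord_P = congOK_power_iff_ord_mod_dvd[OF u n(1) this]
  note ord_P2 = congOK_power_iff_ord_mod_dvd[OF u n(1,3)]
  have "M dvd n"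
    using ord_P2 n(3) by (simp add: M_def)
  with n(2) have "\<not> P dvd M"
    using dvd_trans by blast
  then have "coprime M P"
    using P prime_imp_coprime coprime_commute by blast
  have "congOK D (int P) (u ^ m) 1"
    using ord_P by (simp add: m_def)
  then have "congOK D (int P ^ 2) (u ^ (m * P)) 1"
    using congOK_power_lift[OF OK_power[OF u]] by (simp add: power_mult)
  then have "M dvd m * P"
    using ord_P2 by (simp add: M_def)
  with \<open>coprime M P\<close> have "M dvd m"
    by (simp add: coprime_dvd_mult_left_iff)
  moreover have "congOK D (int P ^ 2) (u ^ M) 1"
    using ord_P2 by (simp add: M_def)
  then have "congOK D (int P) (u ^ M) 1"
    using congOK_dvd_modulus[of "int P" "int P ^ 2"] P0 by simp
  then have "m dvd M"
    using ord_P by (simp add: m_def)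
  ultimately show ?thesis
    by (simp add: m_def M_def dvd_antisym)
qed

end

theorem proposition3p1:
  fixes D p :: int and l :: nat
  assumes "D \<ge> 2" and "squarefree D"
    and "prime p" and "p \<ge> 5" and "\<not> p dvd D"
    and "l \<ge> 1"
    and "\<exists>k::int. dl D l = of_int k \<and> p dvd k"
    and "\<forall>j. 1 \<le> j \<and> j < l \<longrightarrow> \<not> (\<exists>k::int. dl D j = of_int k \<and> p dvd k)"
    and "\<exists>k::int. dl D l = of_int k \<and> p^2 dvd k"
  shows "ord_mod D p (fund_unit D) = ord_mod D (p^2) (fund_unit D)"
proof -
  interpret real_quadratic_field D
    using assms(1,2) by unfold_locales
  define P where "P = nat p"
  have P: "p = int P" "prime P" "P \<ge> 5"
    using assms(3,4) by (simp_all add: P_def)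
  have "\<not> P dvd l"
    using prime_not_dvd_least_dl_index[OF P(2) assms(6)] assms(7,8) by (simp add: P(1))
  moreover have "\<not> P dvd 6"
    using P(2,3) prime_dvd_mult_iff[OF P(2), of 2 3] by (auto dest: dvd_imp_le)
  ultimately have "\<not> P dvd 6 * l"
    using P(2) by (simp add: prime_dvd_mult_iff)
  moreover have "congOK D (int P ^ 2) (fund_unit D ^ (6 * l)) 1"
    using fund_unit_power_congOK_of_dvd_dl assms(9) by (simp add: P(1))
  moreover have "6 * l > 0"
    using assms(6) by simp
  ultimately show ?thesis
    unfolding P(1) by (intro ord_mod_prime_square_eq[OF fund_unit_in_OK P(2)])
qed

end
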